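(* Let $d$ be odd and $s$ even with $s\mid d-1$, and let $G=\langle\tau\rangle\rtimes\langle\sigma\rangle$ with $\tau$ of order $d$, $\sigma$ of order $s$, conjugation by $\sigma$ an automorphism of $\langle\tau\rangle$ of order exactly $s$, and $\sigma^{s/2}\tau\sigma^{-s/2}=\tau^{-1}$. With the left ideals $M_1,\dots,M_4$ of $\mathbb{Z}[G]$ and the maps $d_i,h_i$ defined in the context: (1) the sequence $0\to M_1\xrightarrow{d_1}M_2\xrightarrow{d_2}M_3\xrightarrow{d_3}M_4\to0$ is exact; (2) $h_2$ is a well-defined $\mathbb{Z}[G]$-module homomorphism; (3) the prism conditions hold at all four modules: $h_1d_1=d\cdot\mathrm{id}_{M_1}$, $d_1h_1+h_2d_2=d\cdot\mathrm{id}_{M_2}$, $d_2h_2+h_3d_3=d\cdot\mathrm{id}_{M_3}$, $d_3h_3=d\cdot\mathrm{id}_{M_4}$.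
   Context: $\theta_j\in\{1,\dots,d-1\}$ by $\sigma^j\tau\sigma^{-j}=\tau^{\theta_j}$. In $\mathbb{Z}[G]$: $T_\tau=\sum_{i=0}^{d-1}\tau^i$, $T_\sigma=\sum_{j=0}^{s-1}\sigma^j$, $\mathcal{B}=(1-\sigma^{s/2})\tau^{\frac{d+1}{2}}\sum_{j=0}^{\frac{s}{2}-1}(\sum_{i=0}^{\theta_j-1}\tau^i)\sigma^j$. Left ideals (left $\mathbb{Z}[G]$-modules): $M_1=\mathbb{Z}[G]T_\sigma T_\tau$, $M_2=\mathbb{Z}[G]T_\sigma$, $M_3=\mathbb{Z}[G]\mathcal{B}$, $M_4=\mathbb{Z}[G]\mathcal{B}T_\tau$. Maps: $d_1:M_1\to M_2$ inclusion; $d_2:M_2\to M_3$, $x\mapsto x(1-\tau)$ (note $T_\sigma(1-\tau)\in\mathbb{Z}[G]\mathcal{B}$); $d_3:M_3\to M_4$, $x\mapsto xT_\tau$; $h_1:M_2\to M_1$, $x\mapsto xT_\tau$; $h_2:M_3\to M_2$, $h_2(x\mathcal{B})=x\sum_{i=0}^{d-1}(\frac{d-1}{2}-i)\tau^{i}\tau^{\frac{d+1}{2}}T_\sigma$ for $x\in\mathbb{Z}[G]$; $h_3:M_4\to M_3$ inclusion. *)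

theory Defs
  imports "HOL-Algebra.Algebra" "HOL-Library.Function_Algebras"
begin

(* Integral group ring Z[G] of a finite group G (HOL-Algebra): functions
   carrier G -> int, extended by 0 outside the carrier.  Addition, zero,
   subtraction and finite sums are pointwise (Function_Algebras). *)
definition ZG :: "('a, 'b) monoid_scheme \<Rightarrow> ('a \<Rightarrow> int) set" where
  "ZG G = {x. \<forall>g. g \<notin> carrier G \<longrightarrow> x g = 0}"

definition gmul :: "('a, 'b) monoid_scheme \<Rightarrow> ('a \<Rightarrow> int) \<Rightarrow> ('a \<Rightarrow> int) \<Rightarrow> ('a \<Rightarrow> int)" where
  "gmul G x y = (\<lambda>g. if g \<in> carrier G
      then (\<Sum>h\<in>carrier G. x h * y (inv\<^bsub>G\<^esub> h \<otimes>\<^bsub>G\<^esub> g)) else 0)"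

definition gel :: "('a, 'b) monoid_scheme \<Rightarrow> 'a \<Rightarrow> ('a \<Rightarrow> int)" where
  "gel G g = (\<lambda>k. if k = g then 1 else 0)"

definition zsc :: "int \<Rightarrow> ('a \<Rightarrow> int) \<Rightarrow> ('a \<Rightarrow> int)" where
  "zsc n x = (\<lambda>g. n * x g)"

definition lideal :: "('a, 'b) monoid_scheme \<Rightarrow> ('a \<Rightarrow> int) \<Rightarrow> ('a \<Rightarrow> int) set" where
  "lideal G b = {gmul G x b | x. x \<in> ZG G}"

definition theta :: "('a, 'b) monoid_scheme \<Rightarrow> 'a \<Rightarrow> 'a \<Rightarrow> nat \<Rightarrow> nat \<Rightarrow> nat" where
  "theta G \<tau> \<sigma> d j = (THE t. t \<in> {1..<d} \<and>
      \<sigma> [^]\<^bsub>G\<^esub> j \<otimes>\<^bsub>G\<^esub> \<tau> \<otimes>\<^bsub>G\<^esub> inv\<^bsub>G\<^esub> (\<sigma> [^]\<^bsub>G\<^esub> j) = \<tau> [^]\<^bsub>G\<^esub> t)"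

definition Ttau :: "('a, 'b) monoid_scheme \<Rightarrow> 'a \<Rightarrow> nat \<Rightarrow> ('a \<Rightarrow> int)" where
  "Ttau G \<tau> d = (\<Sum>i<d. gel G (\<tau> [^]\<^bsub>G\<^esub> i))"

definition Tsig :: "('a, 'b) monoid_scheme \<Rightarrow> 'a \<Rightarrow> nat \<Rightarrow> ('a \<Rightarrow> int)" where
  "Tsig G \<sigma> s = (\<Sum>j<s. gel G (\<sigma> [^]\<^bsub>G\<^esub> j))"

definition Bel :: "('a, 'b) monoid_scheme \<Rightarrow> 'a \<Rightarrow> 'a \<Rightarrow> nat \<Rightarrow> nat \<Rightarrow> ('a \<Rightarrow> int)" where
  "Bel G \<tau> \<sigma> d s =
     gmul G (gmul G (gel G \<one>\<^bsub>G\<^esub> - gel G (\<sigma> [^]\<^bsub>G\<^esub> (s div 2)))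
                    (gel G (\<tau> [^]\<^bsub>G\<^esub> ((d + 1) div 2))))
       (\<Sum>j<s div 2. gmul G (\<Sum>i<theta G \<tau> \<sigma> d j. gel G (\<tau> [^]\<^bsub>G\<^esub> i))
                              (gel G (\<sigma> [^]\<^bsub>G\<^esub> j)))"

definition Cel :: "('a, 'b) monoid_scheme \<Rightarrow> 'a \<Rightarrow> 'a \<Rightarrow> nat \<Rightarrow> nat \<Rightarrow> ('a \<Rightarrow> int)" where
  "Cel G \<tau> \<sigma> d s =
     gmul G (gmul G (\<Sum>i<d. zsc ((int d - 1) div 2 - int i) (gel G (\<tau> [^]\<^bsub>G\<^esub> i)))
                    (gel G (\<tau> [^]\<^bsub>G\<^esub> ((d + 1) div 2))))
       (Tsig G \<sigma> s)"

definition M1 where "M1 G \<tau> \<sigma> d s = lideal G (gmul G (Tsig G \<sigma> s) (Ttau G \<tau> d))"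
definition M2 where "M2 G \<tau> \<sigma> d s = lideal G (Tsig G \<sigma> s)"
definition M3 where "M3 G \<tau> \<sigma> d s = lideal G (Bel G \<tau> \<sigma> d s)"
definition M4 where "M4 G \<tau> \<sigma> d s = lideal G (gmul G (Bel G \<tau> \<sigma> d s) (Ttau G \<tau> d))"

definition d1 :: "('a \<Rightarrow> int) \<Rightarrow> ('a \<Rightarrow> int)" where "d1 x = x"
definition d2 where "d2 G \<tau> x = gmul G x (gel G \<one>\<^bsub>G\<^esub> - gel G \<tau>)"
definition d3 where "d3 G \<tau> d x = gmul G x (Ttau G \<tau> d)"
definition h1 where "h1 G \<tau> d x = gmul G x (Ttau G \<tau> d)"
(* h2 (x B) = x C, chosen via any representative x *)
definition h2 where
  "h2 G \<tau> \<sigma> d s m = (SOME z. \<exists>x\<in>ZG G. m = gmul G x (Bel G \<tau> \<sigma> d s) \<and> z = gmul G x (Cel G \<tau> \<sigma> d s))"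
definition h3 :: "('a \<Rightarrow> int) \<Rightarrow> ('a \<Rightarrow> int)" where "h3 x = x"

end

theory Submission
  imports Defs
begin

(*
  All claims reduce to identities in Z[G].  Write N = T_tau, T = T_sigma, omega = 1 - tau,
  u = tau^((d+1)/2) and P = sum_i ((d-1)/2 - i) tau^i, so that the element defining h2 is
  C = P u T.  The relation sigma^j tau = tau^theta_j sigma^j gives T omega = omega W with
  W = sum_j (1 + tau + ... + tau^(theta_j - 1)) sigma^j, and since sigma^(s/2) inverts tau,
  B = u W - N V with V = sum_(j < s/2) sigma^(j + s/2).  As omega N = 0, this yields
  u^-1 omega B = T omega, so d2 maps M2 into M3.  Telescoping gives P omega = omega P = d - N,
  from which C omega + B N = d B and T N + u^-1 omega C = d T: the prism identities on M3 and
  M2.  Those on M1 and M4 follow from N^2 = d N.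

  Exactness and the well-definedness of h2 rest on one observation.  An element x of Z[G] T
  is constant on the cosets g<sigma>, and (x omega)(g) = x g - x (g tau^-1).  Hence, since
  G = <tau><sigma>, if all coefficients of x omega are divisible by n, then x is x(1) times
  the sum of all group elements plus n times an element of Z[G] T.  With n = 0 this gives
  ker d2 = M1.  With n = d, applied to y C, where (y C) omega = d y B - y B N, it gives
  ker d3 = im d2.  Finally, the coefficients of P sum to 0, so C N = 0, and together with the
  case n = 0 this shows that w B = 0 forces w C = 0.
*)

lemma sum_apply: "sum f A x = (\<Sum>a\<in>A. f a x)"
  by (induction A rule: infinite_finite_induct) auto

lemma sum_centred_eq_0:
  assumes "odd d"
  shows "(\<Sum>i<d. (int d - 1) div 2 - int i) = 0"
proof -
  have gauss: "2 * (\<Sum>i<n. int i) = int n * (int n - 1)" for n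
    by (induction n) (simp_all add: algebra_simps)
  have half: "2 * ((int d - 1) div 2) = int d - 1"
    using assms by presburger
  have "2 * (\<Sum>i<d. (int d - 1) div 2 - int i) = int d * (2 * ((int d - 1) div 2)) - 2 * (\<Sum>i<d. int i)"
    by (simp add: sum_subtractf algebra_simps)
  also have "\<dots> = 0"
    unfolding half gauss by simp
  finally show ?thesis by simp
qed

lemma sum_lessThan_add_split:
  fixes f :: "nat \<Rightarrow> 'b::comm_monoid_add"
  shows "(\<Sum>j<a + b. f j) = (\<Sum>j<a. f j) + (\<Sum>j<b. f (j + a))"
  by (induction b) (simp_all add: add_ac)

lemma (in group) conj_nat_pow:
  assumes "x \<in> carrier G" "g \<in> carrier G"
  shows "g \<otimes> x [^] (n::nat) \<otimes> inv g = (g \<otimes> x \<otimes> inv g) [^] n"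
proof (induction n)
  case (Suc n)
  have cancel: "inv g \<otimes> (g \<otimes> y) = y" if "y \<in> carrier G" for y
    using assms that by (simp add: m_assoc [symmetric])
  have "g \<otimes> x [^] Suc n \<otimes> inv g = (g \<otimes> x [^] n \<otimes> inv g) \<otimes> (g \<otimes> x \<otimes> inv g)"
    using assms by (simp add: m_assoc cancel)
  then show ?case using Suc by simp
qed (use assms in simp)

lemma (in group) bij_betw_mult_left_subgroup:
  assumes H: "subgroup H G" and h: "h \<in> H"
  shows "bij_betw (\<lambda>x. h \<otimes> x) H H"
proof (rule bij_betwI[where g = "\<lambda>x. inv h \<otimes> x"])
  have [simp]: "x \<in> H \<Longrightarrow> x \<in> carrier G" for x
    using H by (rule subgroup.mem_carrier)
  show "(\<lambda>x. h \<otimes> x) \<in> H \<rightarrow> H" "(\<lambda>x. inv h \<otimes> x) \<in> H \<rightarrow> H"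
    using H h by (auto intro: subgroup.m_closed subgroup.m_inv_closed)
  show "inv h \<otimes> (h \<otimes> x) = x" "h \<otimes> (inv h \<otimes> y) = y" if "x \<in> H" "y \<in> H" for x y
    using that h by (simp_all add: m_assoc [symmetric])
qed

lemma (in group) bij_betw_mult_right_subgroup:
  assumes H: "subgroup H G" and h: "h \<in> H"
  shows "bij_betw (\<lambda>x. x \<otimes> h) H H"
proof (rule bij_betwI[where g = "\<lambda>x. x \<otimes> inv h"])
  have [simp]: "x \<in> H \<Longrightarrow> x \<in> carrier G" for x
    using H by (rule subgroup.mem_carrier)
  show "(\<lambda>x. x \<otimes> h) \<in> H \<rightarrow> H" "(\<lambda>x. x \<otimes> inv h) \<in> H \<rightarrow> H"
    using H h by (auto intro: subgroup.m_closed subgroup.m_inv_closed)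
  show "x \<otimes> h \<otimes> inv h = x" "y \<otimes> inv h \<otimes> h = y" if "x \<in> H" "y \<in> H" for x y
    using that h by (simp_all add: m_assoc)
qed

section \<open>Integral group rings\<close>

lemma ZG_gmul [simp]: "gmul G x y \<in> ZG G"
  by (simp add: ZG_def gmul_def)

lemma ZG_gel [simp]: "g \<in> carrier G \<Longrightarrow> gel G g \<in> ZG G"
  by (auto simp: ZG_def gel_def)

lemma ZG_zero [simp]: "0 \<in> ZG G"
  by (auto simp: ZG_def)

lemma ZG_add [simp]: "x \<in> ZG G \<Longrightarrow> y \<in> ZG G \<Longrightarrow> x + y \<in> ZG G"
  by (auto simp: ZG_def)

lemma ZG_zsc [simp]: "x \<in> ZG G \<Longrightarrow> zsc n x \<in> ZG G"
  by (auto simp: ZG_def zsc_def)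

lemma ZG_sum [simp]: "(\<And>i. i \<in> A \<Longrightarrow> f i \<in> ZG G) \<Longrightarrow> sum f A \<in> ZG G"
  by (induction A rule: infinite_finite_induct) auto

lemma zsc_apply: "zsc n x g = n * x g"
  by (simp add: zsc_def)

lemma zsc_zsc [simp]: "zsc m (zsc n x) = zsc (m * n) x"
  by (simp add: zsc_def mult.assoc)

lemma zsc_zero_left [simp]: "zsc 0 x = 0"
  by (simp add: zsc_def zero_fun_def)

lemma zsc_zero_right [simp]: "zsc n 0 = 0"
  by (simp add: zsc_def zero_fun_def)

lemma zsc_diff: "zsc n (x - y) = zsc n x - zsc n y"
  by (rule ext) (simp add: zsc_def algebra_simps)

lemma sum_zsc: "(\<Sum>i\<in>A. zsc (c i) x) = zsc (\<Sum>i\<in>A. c i) x"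
  by (rule ext) (simp add: sum_apply zsc_def sum_distrib_right)

lemma zsc_cancel: "n \<noteq> 0 \<Longrightarrow> zsc n x = zsc n y \<Longrightarrow> x = y"
  by (rule ext) (metis mult_cancel_left zsc_def)

lemma gel_apply: "gel G g k = (if k = g then 1 else 0)"
  by (simp add: gel_def)

locale group_ring = group G for G :: "('a, 'b) monoid_scheme" (structure) +
  assumes finite_carrier [simp]: "finite (carrier G)"
begin

abbreviation gmult :: "('a \<Rightarrow> int) \<Rightarrow> ('a \<Rightarrow> int) \<Rightarrow> 'a \<Rightarrow> int" (infixl "\<star>" 70)
  where "x \<star> y \<equiv> gmul G x y"

abbreviation \<delta> :: "'a \<Rightarrow> 'a \<Rightarrow> int"
  where "\<delta> \<equiv> gel G"

lemma gmul_apply: "g \<in> carrier G \<Longrightarrow> (x \<star> y) g = (\<Sum>h\<in>carrier G. x h * y (inv h \<otimes> g))"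
  by (simp add: gmul_def)

lemma gmul_outside: "g \<notin> carrier G \<Longrightarrow> (x \<star> y) g = 0"
  by (simp add: gmul_def)

lemma gmul_add_left: "(x + y) \<star> z = x \<star> z + y \<star> z"
  by (rule ext) (simp add: gmul_def distrib_right sum.distrib)

lemma gmul_add_right: "z \<star> (x + y) = z \<star> x + z \<star> y"
  by (rule ext) (simp add: gmul_def distrib_left sum.distrib)

lemma gmul_diff_left: "(x - y) \<star> z = x \<star> z - y \<star> z"
  by (rule ext) (simp add: gmul_def left_diff_distrib sum_subtractf)

lemma gmul_diff_right: "z \<star> (x - y) = z \<star> x - z \<star> y"
  by (rule ext) (simp add: gmul_def right_diff_distrib sum_subtractf)

lemma gmul_zero_left [simp]: "0 \<star> z = 0"
  by (rule ext) (simp add: gmul_def)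

lemma gmul_zero_right [simp]: "z \<star> 0 = 0"
  by (rule ext) (simp add: gmul_def)

lemma gmul_zsc_left: "zsc n x \<star> z = zsc n (x \<star> z)"
  by (rule ext) (simp add: gmul_def zsc_def sum_distrib_left mult.assoc)

lemma gmul_zsc_right: "z \<star> zsc n x = zsc n (z \<star> x)"
  by (rule ext) (simp add: gmul_def zsc_def sum_distrib_left algebra_simps)

lemma gmul_sum_left: "sum f A \<star> z = (\<Sum>i\<in>A. f i \<star> z)"
proof (induction A rule: infinite_finite_induct)
  case (insert a F)
  then show ?case by (metis sum.insert gmul_add_left)
qed (metis sum.infinite sum.empty gmul_zero_left)+

lemma gmul_sum_right: "z \<star> sum f A = (\<Sum>i\<in>A. z \<star> f i)"
proof (induction A rule: infinite_finite_induct)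
  case (insert a F)
  then show ?case by (metis sum.insert gmul_add_right)
qed (metis sum.infinite sum.empty gmul_zero_right)+

lemma gmul_assoc: "(x \<star> y) \<star> z = x \<star> (y \<star> z)"
proof (rule ext)
  fix g
  show "((x \<star> y) \<star> z) g = (x \<star> (y \<star> z)) g"
  proof (cases "g \<in> carrier G")
    case False
    then show ?thesis by (simp add: gmul_outside)
  next
    case g: True
    have inner: "(\<Sum>h\<in>carrier G. y (inv k \<otimes> h) * z (inv h \<otimes> g)) =
        (\<Sum>h\<in>carrier G. y h * z (inv h \<otimes> (inv k \<otimes> g)))" if k: "k \<in> carrier G" for k
    proof -
      have "(\<Sum>h\<in>carrier G. y (inv k \<otimes> h) * z (inv h \<otimes> g)) =
          (\<Sum>h\<in>carrier G. y (inv k \<otimes> (k \<otimes> h)) * z (inv (k \<otimes> h) \<otimes> g))"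
        using sum.reindex_bij_betw[OF bij_betw_mult_left_subgroup[OF subgroup_self k],
            of "\<lambda>h. y (inv k \<otimes> h) * z (inv h \<otimes> g)"] by simp
      also have "\<dots> = (\<Sum>h\<in>carrier G. y h * z (inv h \<otimes> (inv k \<otimes> g)))"
        using k g by (intro sum.cong) (auto simp: m_assoc [symmetric] inv_mult_group)
      finally show ?thesis .
    qed
    have "((x \<star> y) \<star> z) g = (\<Sum>h\<in>carrier G. \<Sum>k\<in>carrier G. x k * y (inv k \<otimes> h) * z (inv h \<otimes> g))"
      using g by (simp add: gmul_apply sum_distrib_right)
    also have "\<dots> = (\<Sum>k\<in>carrier G. x k * (\<Sum>h\<in>carrier G. y (inv k \<otimes> h) * z (inv h \<otimes> g)))"
      by (subst sum.swap) (simp add: sum_distrib_left mult.assoc)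
    also have "\<dots> = (x \<star> (y \<star> z)) g"
      using g by (simp add: gmul_apply inner)
    finally show ?thesis .
  qed
qed

lemma gmul_gel_right_apply:
  assumes g: "g \<in> carrier G" and h: "h \<in> carrier G"
  shows "(x \<star> \<delta> h) g = x (g \<otimes> inv h)"
proof -
  have iff: "inv k \<otimes> g = h \<longleftrightarrow> k = g \<otimes> inv h" if "k \<in> carrier G" for k
    using that g h by (metis inv_closed inv_inv inv_solve_left inv_solve_right m_closed)
  have "(x \<star> \<delta> h) g = (\<Sum>k\<in>carrier G. if k = g \<otimes> inv h then x k else 0)"
    unfolding gmul_apply[OF g] gel_def using iff by (intro sum.cong) auto
  also have "\<dots> = x (g \<otimes> inv h)"
    using g h by simp
  finally show ?thesis .
qed

lemma gmul_gel_left_apply: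
  assumes g: "g \<in> carrier G" and h: "h \<in> carrier G"
  shows "(\<delta> h \<star> x) g = x (inv h \<otimes> g)"
proof -
  have "(\<delta> h \<star> x) g = (\<Sum>k\<in>carrier G. if k = h then x (inv k \<otimes> g) else 0)"
    unfolding gmul_apply[OF g] gel_def by (intro sum.cong) auto
  also have "\<dots> = x (inv h \<otimes> g)"
    using h by simp
  finally show ?thesis .
qed

lemma gel_mult:
  assumes g: "g \<in> carrier G" and h: "h \<in> carrier G"
  shows "\<delta> g \<star> \<delta> h = \<delta> (g \<otimes> h)"
proof (rule ext)
  fix k
  show "(\<delta> g \<star> \<delta> h) k = \<delta> (g \<otimes> h) k"
  proof (cases "k \<in> carrier G")
    case True
    have "inv g \<otimes> k = h \<longleftrightarrow> k = g \<otimes> h"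
      using True g h by (metis inv_solve_left)
    then show ?thesis
      using True g h by (simp add: gmul_gel_left_apply gel_apply)
  next
    case False
    then show ?thesis using g h by (auto simp: gmul_outside gel_apply)
  qed
qed

lemma gel_one_left:
  assumes "x \<in> ZG G"
  shows "\<delta> \<one> \<star> x = x"
proof (rule ext)
  fix g
  show "(\<delta> \<one> \<star> x) g = x g"
    using assms by (cases "g \<in> carrier G") (auto simp: gmul_gel_left_apply gmul_outside ZG_def)
qed

lemma gel_one_right:
  assumes "x \<in> ZG G"
  shows "x \<star> \<delta> \<one> = x"
proof (rule ext)
  fix g
  show "(x \<star> \<delta> \<one>) g = x g"
    using assms by (cases "g \<in> carrier G") (auto simp: gmul_gel_right_apply gmul_outside ZG_def)
qed

lemma ZG_expand: "x \<in> ZG G \<Longrightarrow> x = (\<Sum>g\<in>carrier G. zsc (x g) (\<delta> g))"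
  by (rule ext) (auto simp: sum_apply zsc_def gel_apply ZG_def if_distrib cong: if_cong)

lemma geometric_sum_telescope:
  assumes "g \<in> carrier G"
  shows "(\<delta> \<one> - \<delta> g) \<star> (\<Sum>i<k. \<delta> (g [^] i)) = \<delta> \<one> - \<delta> (g [^] (k::nat))"
proof -
  have pow_comm: "g \<otimes> g [^] i = g [^] i \<otimes> g" for i :: nat
    using assms by (metis nat_pow_Suc nat_pow_Suc2)
  have "(\<delta> \<one> - \<delta> g) \<star> (\<Sum>i<k. \<delta> (g [^] i)) = (\<Sum>i<k. \<delta> (g [^] i) - \<delta> (g [^] Suc i))"
    using assms by (simp add: gmul_diff_left gel_one_left gmul_sum_right gel_mult pow_comm)
  also have "\<dots> = \<delta> (g [^] (0::nat)) - \<delta> (g [^] k)"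
    by (rule sum_lessThan_telescope')
  finally show ?thesis by simp
qed

lemma linear_sum_telescope:
  assumes g: "g \<in> carrier G"
  shows "(\<Sum>i<k. zsc (c - int i) (\<delta> (g [^] i))) \<star> (\<delta> \<one> - \<delta> g) =
    zsc (c + 1) (\<delta> \<one>) - (\<Sum>i<k. \<delta> (g [^] i)) - zsc (c + 1 - int k) (\<delta> (g [^] (k::nat)))"
proof (induction k)
  case 0
  show ?case by (simp only: lessThan_0 sum.empty gmul_zero_left) simp
next
  case (Suc k)
  have step: "zsc (c - int k) (\<delta> (g [^] k)) \<star> (\<delta> \<one> - \<delta> g) =
      zsc (c - int k) (\<delta> (g [^] k)) - zsc (c - int k) (\<delta> (g [^] Suc k))"
    using g by (simp add: gmul_zsc_left gmul_diff_right gel_one_right gel_mult zsc_diff)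
  have shift: "zsc (c + 1 - int k) (\<delta> (g [^] k)) = zsc (c - int k) (\<delta> (g [^] k)) + \<delta> (g [^] k)"
    by (rule ext) (simp add: zsc_apply algebra_simps)
  have coeff: "c + 1 - int (Suc k) = c - int k"
    by simp
  have "(\<Sum>i<Suc k. zsc (c - int i) (\<delta> (g [^] i))) \<star> (\<delta> \<one> - \<delta> g) =
      (zsc (c + 1) (\<delta> \<one>) - (\<Sum>i<k. \<delta> (g [^] i)) - zsc (c + 1 - int k) (\<delta> (g [^] k))) +
      (zsc (c - int k) (\<delta> (g [^] k)) - zsc (c - int k) (\<delta> (g [^] Suc k)))"
    by (simp only: sum.lessThan_Suc gmul_add_left Suc.IH step)
  also have "\<dots> = zsc (c + 1) (\<delta> \<one>) - ((\<Sum>i<k. \<delta> (g [^] i)) + \<delta> (g [^] k)) -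
      zsc (c - int k) (\<delta> (g [^] Suc k))"
    by (rule ext) (simp only: shift plus_fun_apply minus_apply)
  finally show ?case
    by (simp only: sum.lessThan_Suc coeff)
qed

lemma gel_commute_power_sum:
  assumes "g \<in> carrier G"
  shows "\<delta> g \<star> (\<Sum>i\<in>A. zsc (c i) (\<delta> (g [^] i))) = (\<Sum>i\<in>A. zsc (c i) (\<delta> (g [^] (i::nat)))) \<star> \<delta> g"
proof -
  have "g \<otimes> g [^] i = g [^] i \<otimes> g" for i :: nat
    using assms by (metis nat_pow_Suc nat_pow_Suc2)
  then show ?thesis
    using assms by (simp add: gmul_sum_left gmul_sum_right gmul_zsc_left gmul_zsc_right gel_mult)
qed

lemma lideal_iff: "x \<in> lideal G b \<longleftrightarrow> (\<exists>y\<in>ZG G. x = y \<star> b)"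
  by (auto simp: lideal_def)

lemma gmul_mem_lideal [simp]: "y \<in> ZG G \<Longrightarrow> y \<star> b \<in> lideal G b"
  by (auto simp: lideal_iff)

lemma lideal_subset: "b \<in> lideal G b' \<Longrightarrow> lideal G b \<subseteq> lideal G b'"
  by (auto simp: lideal_iff) (metis gmul_assoc ZG_gmul)

lemma image_gmul_right_lideal: "(\<lambda>x. x \<star> c) ` lideal G b = lideal G (b \<star> c)"
proof
  show "(\<lambda>x. x \<star> c) ` lideal G b \<subseteq> lideal G (b \<star> c)"
    by (auto simp: lideal_def gmul_assoc)
  show "lideal G (b \<star> c) \<subseteq> (\<lambda>x. x \<star> c) ` lideal G b"
  proof
    fix x
    assume "x \<in> lideal G (b \<star> c)"
    then obtain y where "y \<in> ZG G" "x = (y \<star> b) \<star> c"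
      by (auto simp: lideal_iff gmul_assoc)
    then show "x \<in> (\<lambda>x. x \<star> c) ` lideal G b"
      by (auto simp: lideal_iff intro!: imageI)
  qed
qed

lemma lideal_gmul_scaled_idem:
  assumes "c \<star> c = zsc n c" "x \<in> lideal G (b \<star> c)"
  shows "x \<star> c = zsc n x"
  using assms by (auto simp: lideal_iff gmul_assoc gmul_zsc_right)

subsection \<open>Norm elements of subgroups\<close>

definition norm_el :: "'a set \<Rightarrow> 'a \<Rightarrow> int"
  where "norm_el H = (\<Sum>h\<in>H. \<delta> h)"

lemma ZG_norm_el [simp]:
  assumes "H \<subseteq> carrier G"
  shows "norm_el H \<in> ZG G"
  unfolding norm_el_def using assms by (intro ZG_sum) auto

lemma norm_el_carrier_apply: "norm_el (carrier G) g = (if g \<in> carrier G then 1 else 0)"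
  by (simp add: norm_el_def sum_apply gel_apply)

lemma norm_el_absorb_left:
  assumes "subgroup H G" "h \<in> H"
  shows "\<delta> h \<star> norm_el H = norm_el H"
proof -
  have "\<delta> h \<star> norm_el H = (\<Sum>x\<in>H. \<delta> (h \<otimes> x))"
    using assms by (simp add: norm_el_def gmul_sum_right gel_mult subgroup.mem_carrier)
  also have "\<dots> = norm_el H"
    unfolding norm_el_def by (rule sum.reindex_bij_betw[OF bij_betw_mult_left_subgroup[OF assms]])
  finally show ?thesis .
qed

lemma norm_el_absorb_right:
  assumes "subgroup H G" "h \<in> H"
  shows "norm_el H \<star> \<delta> h = norm_el H"
proof -
  have "norm_el H \<star> \<delta> h = (\<Sum>x\<in>H. \<delta> (x \<otimes> h))"
    using assms by (simp add: norm_el_def gmul_sum_left gel_mult subgroup.mem_carrier)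
  also have "\<dots> = norm_el H"
    unfolding norm_el_def by (rule sum.reindex_bij_betw[OF bij_betw_mult_right_subgroup[OF assms]])
  finally show ?thesis .
qed

lemma sum_gel_mult_norm_el:
  assumes "subgroup H G" "f ` A \<subseteq> H"
  shows "(\<Sum>i\<in>A. \<delta> (f i)) \<star> norm_el H = zsc (int (card A)) (norm_el H)"
proof -
  have "(\<Sum>i\<in>A. \<delta> (f i)) \<star> norm_el H = (\<Sum>i\<in>A. \<delta> (f i) \<star> norm_el H)"
    by (rule gmul_sum_left)
  also have "\<dots> = (\<Sum>i\<in>A. norm_el H)"
    using assms by (intro sum.cong refl) (auto intro: norm_el_absorb_left)
  also have "\<dots> = zsc (int (card A)) (norm_el H)"
    by (rule ext) (simp add: zsc_apply)
  finally show ?thesis .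
qed

lemma norm_el_mult_sum_gel:
  assumes "subgroup H G" "f ` A \<subseteq> H"
  shows "norm_el H \<star> (\<Sum>i\<in>A. \<delta> (f i)) = zsc (int (card A)) (norm_el H)"
proof -
  have "norm_el H \<star> (\<Sum>i\<in>A. \<delta> (f i)) = (\<Sum>i\<in>A. norm_el H \<star> \<delta> (f i))"
    by (rule gmul_sum_right)
  also have "\<dots> = (\<Sum>i\<in>A. norm_el H)"
    using assms by (intro sum.cong refl) (auto intro: norm_el_absorb_right)
  also have "\<dots> = zsc (int (card A)) (norm_el H)"
    by (rule ext) (simp add: zsc_apply)
  finally show ?thesis .
qed

lemma norm_el_square:
  assumes "subgroup H G"
  shows "norm_el H \<star> norm_el H = zsc (int (card H)) (norm_el H)"
  using sum_gel_mult_norm_el[OF assms, of "\<lambda>h. h" H] by (simp add: norm_el_def)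

lemma norm_el_annihilates:
  assumes "subgroup H G" "h \<in> H"
  shows "norm_el H \<star> (\<delta> \<one> - \<delta> h) = 0" "(\<delta> \<one> - \<delta> h) \<star> norm_el H = 0"
  using assms subgroup.subset[OF assms(1)] subgroup.mem_carrier[OF assms]
  by (simp_all add: gmul_diff_left gmul_diff_right gel_one_left gel_one_right
      norm_el_absorb_left norm_el_absorb_right)

lemma norm_el_commute_conj:
  assumes H: "H \<subseteq> carrier G" "finite H" and g: "g \<in> carrier G"
    and conj: "\<And>h. h \<in> H \<Longrightarrow> g \<otimes> h \<otimes> inv g \<in> H"
  shows "\<delta> g \<star> norm_el H = norm_el H \<star> \<delta> g"
proof -
  let ?c = "\<lambda>h. g \<otimes> h \<otimes> inv g"
  have inj: "inj_on ?c H"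
    by (intro inj_onI) (metis H(1) g inv_closed m_closed r_cancel l_cancel subsetD)
  have img: "?c ` H = H"
    by (rule endo_inj_surj) (use H conj inj in auto)
  have "\<delta> g \<star> norm_el H = (\<Sum>h\<in>H. \<delta> (?c h \<otimes> g))"
    using H g by (auto simp: norm_el_def gmul_sum_right gel_mult m_assoc intro!: sum.cong)
  also have "\<dots> = (\<Sum>h\<in>H. \<delta> (h \<otimes> g))"
    using sum.reindex[OF inj, of "\<lambda>h. \<delta> (h \<otimes> g)"] img by simp
  also have "\<dots> = norm_el H \<star> \<delta> g"
    using H g by (auto simp: norm_el_def gmul_sum_left gel_mult intro!: sum.cong)
  finally show ?thesis .
qed

abbreviation powers :: "'a \<Rightarrow> 'a set"
  where "powers g \<equiv> (\<lambda>i::nat. g [^] i) ` {..<ord g}"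

lemma ord_pos: "g \<in> carrier G \<Longrightarrow> 0 < ord g"
  using ord_ge_1[OF finite_carrier] by fastforce

lemma pow_mod_ord:
  assumes "g \<in> carrier G"
  shows "g [^] (n::nat) = g [^] (n mod ord g)"
proof -
  have "g [^] n = g [^] (ord g * (n div ord g) + n mod ord g)"
    by simp
  also have "\<dots> = (g [^] ord g) [^] (n div ord g) \<otimes> g [^] (n mod ord g)"
    using assms by (simp only: nat_pow_pow nat_pow_mult nat_pow_closed)
  also have "\<dots> = g [^] (n mod ord g)"
    using assms by simp
  finally show ?thesis .
qed

lemma pow_in_powers [simp]:
  assumes "g \<in> carrier G"
  shows "g [^] (n::nat) \<in> powers g"
proof (rule image_eqI[where x = "n mod ord g"])
  show "g [^] n = g [^] (n mod ord g)"
    using assms by (rule pow_mod_ord)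
  show "n mod ord g \<in> {..<ord g}"
    using ord_pos[OF assms] by simp
qed

lemma gen_in_powers: "g \<in> carrier G \<Longrightarrow> g \<in> powers g"
  using pow_in_powers[of g 1] by simp

lemma inj_on_powers:
  assumes "g \<in> carrier G"
  shows "inj_on (\<lambda>i::nat. g [^] i) {..<ord g}"
proof -
  have "{..<ord g} = {0..ord g - 1}" using ord_pos[OF assms] by auto
  then show ?thesis using ord_inj[OF assms] by simp
qed

lemma card_powers: "g \<in> carrier G \<Longrightarrow> card (powers g) = ord g"
  using inj_on_powers by (simp add: card_image)

lemma subgroup_powers:
  assumes "g \<in> carrier G"
  shows "subgroup (powers g) G"
proof -
  have "powers g = {g [^] i | i. i \<in> {0..ord g - 1}}"
    using ord_pos[OF assms] by force
  then show ?thesis using element_generates_subgroup[OF finite_carrier assms] by simp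
qed

lemma sum_powers_eq_norm_el:
  "g \<in> carrier G \<Longrightarrow> (\<Sum>i\<in>{..<ord g}. \<delta> (g [^] i)) = norm_el (powers g)"
  by (simp add: norm_el_def sum.reindex[OF inj_on_powers])

end

section \<open>The metacyclic group\<close>

locale metacyclic = group_ring G for G :: "('a, 'b) monoid_scheme" (structure) +
  fixes \<tau> \<sigma> :: 'a and d s :: nat
  assumes d_odd: "odd d" and s_even: "even s"
    and tau_closed [simp]: "\<tau> \<in> carrier G" and sigma_closed [simp]: "\<sigma> \<in> carrier G"
    and ord_tau: "ord \<tau> = d" and ord_sigma: "ord \<sigma> = s"
    and carrier_eq: "carrier G = {\<tau> [^] i \<otimes> \<sigma> [^] j | i j. i < d \<and> j < s}"
    and card_carrier: "card (carrier G) = d * s"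
    and conj_sigma_tau: "\<sigma> \<otimes> \<tau> \<otimes> inv \<sigma> \<in> {\<tau> [^] i | i. i < d}"
    and conj_sigma_pow_tau_ne: "\<forall>k. 0 < k \<and> k < s \<longrightarrow> \<sigma> [^] k \<otimes> \<tau> \<otimes> inv (\<sigma> [^] k) \<noteq> \<tau>"
    and conj_sigma_half: "\<sigma> [^] (s div 2) \<otimes> \<tau> \<otimes> inv (\<sigma> [^] (s div 2)) = inv \<tau>"
begin

abbreviation \<theta> :: "nat \<Rightarrow> nat" where "\<theta> \<equiv> theta G \<tau> \<sigma> d"
abbreviation H :: "'a set" where "H \<equiv> powers \<tau>"

lemma s_ge_2: "2 \<le> s"
proof -
  have "\<one> \<in> carrier G" by simp
  then obtain i j where "j < s" using carrier_eq by auto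
  then show ?thesis using s_even by presburger
qed

lemma tau_ne_one: "\<tau> \<noteq> \<one>"
proof
  assume "\<tau> = \<one>"
  then have "\<sigma> [^] (1::nat) \<otimes> \<tau> \<otimes> inv (\<sigma> [^] (1::nat)) = \<tau>" by simp
  then show False using conj_sigma_pow_tau_ne s_ge_2 by auto
qed

lemma d_ge_3: "3 \<le> d"
proof -
  have "d \<noteq> 1" using ord_eq_1 ord_tau tau_ne_one by auto
  then show ?thesis using d_odd by presburger
qed

lemma tau_pow_ord [simp]: "\<tau> [^] d = \<one>"
  using pow_ord_eq_1[OF tau_closed] ord_tau by simp

lemma tau_in_H [simp]: "\<tau> \<in> H"
  by (rule gen_in_powers) simp

lemma inj_on_tau_pow: "inj_on (\<lambda>i. \<tau> [^] i) {..<d}"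
  using inj_on_powers[OF tau_closed] ord_tau by simp

lemma subgroup_H: "subgroup H G"
  by (rule subgroup_powers) simp

lemma card_H: "card H = d"
  using card_powers[OF tau_closed] ord_tau by simp

lemma Ttau_eq_norm_el: "Ttau G \<tau> d = norm_el H"
  using sum_powers_eq_norm_el[OF tau_closed] ord_tau by (simp add: Ttau_def)

lemma Tsig_eq_norm_el: "Tsig G \<sigma> s = norm_el (powers \<sigma>)"
  using sum_powers_eq_norm_el[OF sigma_closed] ord_sigma by (simp add: Tsig_def)

lemma conj_sigma_pow_tau: "\<exists>k<d. \<sigma> [^] (j::nat) \<otimes> \<tau> \<otimes> inv (\<sigma> [^] j) = \<tau> [^] k"
proof (induction j)
  case 0
  show ?case using d_ge_3 by (intro exI[of _ 1]) auto
next
  case (Suc j)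
  then obtain k :: nat where k: "\<sigma> [^] j \<otimes> \<tau> \<otimes> inv (\<sigma> [^] j) = \<tau> [^] k" by auto
  obtain r :: nat where r: "\<sigma> \<otimes> \<tau> \<otimes> inv \<sigma> = \<tau> [^] r" using conj_sigma_tau by auto
  have "\<sigma> [^] Suc j \<otimes> \<tau> \<otimes> inv (\<sigma> [^] Suc j) = \<sigma> \<otimes> (\<sigma> [^] j \<otimes> \<tau> \<otimes> inv (\<sigma> [^] j)) \<otimes> inv \<sigma>"
    unfolding nat_pow_Suc2[OF sigma_closed] by (simp add: inv_mult_group m_assoc del: nat_pow_Suc)
  also have "\<dots> = (\<sigma> \<otimes> \<tau> \<otimes> inv \<sigma>) [^] k"
    using k conj_nat_pow by simp
  also have "\<dots> = \<tau> [^] ((r * k) mod d)"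
    using r pow_mod_ord[OF tau_closed] ord_tau by (simp add: nat_pow_pow)
  finally show ?case using d_ge_3 by (intro exI[of _ "(r * k) mod d"]) auto
qed

lemma theta: "\<theta> j \<in> {1..<d}" "\<sigma> [^] j \<otimes> \<tau> \<otimes> inv (\<sigma> [^] j) = \<tau> [^] \<theta> j"
proof -
  obtain k where k: "k < d" "\<sigma> [^] j \<otimes> \<tau> \<otimes> inv (\<sigma> [^] j) = \<tau> [^] k"
    using conj_sigma_pow_tau by blast
  have "\<sigma> [^] j \<otimes> \<tau> \<otimes> inv (\<sigma> [^] j) \<noteq> \<one>"
    using tau_ne_one by (metis inv_closed inv_solve_right l_cancel_one l_one m_closed nat_pow_closed
        one_closed sigma_closed tau_closed)
  then have "k \<noteq> 0" using k(2) by (metis nat_pow_0)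
  then have "\<exists>!t. t \<in> {1..<d} \<and> \<sigma> [^] j \<otimes> \<tau> \<otimes> inv (\<sigma> [^] j) = \<tau> [^] t"
    using k inj_on_tau_pow by (intro ex1I[of _ k]) (auto dest: inj_onD)
  then have "\<theta> j \<in> {1..<d} \<and> \<sigma> [^] j \<otimes> \<tau> \<otimes> inv (\<sigma> [^] j) = \<tau> [^] \<theta> j"
    unfolding theta_def by (rule theI')
  then show "\<theta> j \<in> {1..<d}" "\<sigma> [^] j \<otimes> \<tau> \<otimes> inv (\<sigma> [^] j) = \<tau> [^] \<theta> j"
    by auto
qed

lemma theta_unique:
  assumes "t \<in> {1..<d}" "\<sigma> [^] j \<otimes> \<tau> \<otimes> inv (\<sigma> [^] j) = \<tau> [^] t"
  shows "\<theta> j = t"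
  using theta[of j] assms inj_on_tau_pow by (auto dest: inj_onD)

lemma sigma_pow_mult_tau_pow: "\<sigma> [^] j \<otimes> \<tau> [^] i = \<tau> [^] (\<theta> j * i) \<otimes> \<sigma> [^] j"
proof -
  have "\<sigma> [^] j \<otimes> \<tau> [^] i \<otimes> inv (\<sigma> [^] j) = \<tau> [^] (\<theta> j * i)"
    using conj_nat_pow[of \<tau> "\<sigma> [^] j" i] theta(2)[of j] by (simp add: nat_pow_pow)
  then show ?thesis
    by (metis inv_closed inv_solve_right m_closed nat_pow_closed sigma_closed tau_closed)
qed

lemma sigma_pow_mult_tau: "\<sigma> [^] j \<otimes> \<tau> = \<tau> [^] \<theta> j \<otimes> \<sigma> [^] j"
  using sigma_pow_mult_tau_pow[of j 1] by simp

lemma sigma_half_mult_tau_pow: "\<sigma> [^] (s div 2) \<otimes> \<tau> [^] (k::nat) = inv (\<tau> [^] k) \<otimes> \<sigma> [^] (s div 2)"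
proof -
  have "\<sigma> [^] (s div 2) \<otimes> \<tau> [^] k \<otimes> inv (\<sigma> [^] (s div 2)) = inv (\<tau> [^] k)"
    using conj_nat_pow[of \<tau> "\<sigma> [^] (s div 2)" k] conj_sigma_half by (simp add: nat_pow_inv)
  then show ?thesis
    by (metis inv_closed inv_solve_right m_closed nat_pow_closed sigma_closed tau_closed)
qed

lemma theta_add_half: "\<theta> (j + s div 2) = d - \<theta> j"
proof (rule theta_unique)
  show "d - \<theta> j \<in> {1..<d}" using theta(1)[of j] by auto
  have "\<sigma> [^] (j + s div 2) \<otimes> \<tau> \<otimes> inv (\<sigma> [^] (j + s div 2)) =
      \<sigma> [^] j \<otimes> (\<sigma> [^] (s div 2) \<otimes> \<tau> \<otimes> inv (\<sigma> [^] (s div 2))) \<otimes> inv (\<sigma> [^] j)"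
    by (simp add: nat_pow_mult [symmetric] inv_mult_group m_assoc)
  also have "\<dots> = inv (\<sigma> [^] j \<otimes> \<tau> \<otimes> inv (\<sigma> [^] j))"
    using conj_sigma_half by (simp add: inv_mult_group m_assoc)
  also have "\<dots> = \<tau> [^] (d - \<theta> j)"
  proof (rule inv_equality)
    show "\<tau> [^] (d - \<theta> j) \<otimes> (\<sigma> [^] j \<otimes> \<tau> \<otimes> inv (\<sigma> [^] j)) = \<one>"
      using theta[of j] pow_eq_id ord_tau by (simp add: nat_pow_mult)
  qed auto
  finally show "\<sigma> [^] (j + s div 2) \<otimes> \<tau> \<otimes> inv (\<sigma> [^] (j + s div 2)) = \<tau> [^] (d - \<theta> j)" .
qed

lemma inv_tau_pow_shift:
  assumes "i < d"
  shows "inv (\<tau> [^] ((d + 1) div 2 + i)) = \<tau> [^] ((d + 1) div 2 + (d - 1 - i))"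
proof (rule inv_equality)
  have "2 * ((d + 1) div 2) = d + 1" using d_odd by presburger
  then have "(d + 1) div 2 + (d - 1 - i) + ((d + 1) div 2 + i) = d * 2" using assms by linarith
  then show "\<tau> [^] ((d + 1) div 2 + (d - 1 - i)) \<otimes> \<tau> [^] ((d + 1) div 2 + i) = \<one>"
    by (simp add: nat_pow_mult nat_pow_pow [symmetric])
qed simp_all

lemma sum_lessThan_s_split:
  "(\<Sum>j<s. f j) = (\<Sum>j<s div 2. f j) + (\<Sum>j<s div 2. f (j + s div 2))"
proof -
  have "s = s div 2 + s div 2" using s_even by presburger
  then have "(\<Sum>j<s. f j) = (\<Sum>j<s div 2 + s div 2. f j)"
    by (rule arg_cong[where f = "\<lambda>n. \<Sum>j<n. f j"])
  then show ?thesis by (simp only: sum_lessThan_add_split)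
qed

lemma conj_sigma_pow_H:
  assumes "h \<in> H"
  shows "\<sigma> [^] (j::nat) \<otimes> h \<otimes> inv (\<sigma> [^] j) \<in> H"
proof -
  obtain i :: nat where "h = \<tau> [^] i" using assms by blast
  then have "\<sigma> [^] j \<otimes> h \<otimes> inv (\<sigma> [^] j) = \<tau> [^] (\<theta> j * i) \<otimes> \<sigma> [^] j \<otimes> inv (\<sigma> [^] j)"
    by (simp only: sigma_pow_mult_tau_pow)
  also have "\<dots> = \<tau> [^] (\<theta> j * i)"
    by (simp add: m_assoc)
  finally show ?thesis by simp
qed

lemma bij_betw_tau_sigma_pow: "bij_betw (\<lambda>(i, j). \<tau> [^] i \<otimes> \<sigma> [^] j) ({..<d} \<times> {..<s}) (carrier G)"
proof -
  have img: "(\<lambda>(i, j). \<tau> [^] i \<otimes> \<sigma> [^] j) ` ({..<d} \<times> {..<s}) = carrier G"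
    by (subst carrier_eq) auto
  then have "inj_on (\<lambda>(i, j). \<tau> [^] i \<otimes> \<sigma> [^] j) ({..<d} \<times> {..<s})"
    by (intro eq_card_imp_inj_on) (auto simp: card_carrier card_cartesian_product)
  then show ?thesis using img by (simp add: bij_betw_def)
qed

subsection \<open>Identities in the group ring\<close>

abbreviation N :: "'a \<Rightarrow> int" where "N \<equiv> Ttau G \<tau> d"
abbreviation T :: "'a \<Rightarrow> int" where "T \<equiv> Tsig G \<sigma> s"
abbreviation B :: "'a \<Rightarrow> int" where "B \<equiv> Bel G \<tau> \<sigma> d s"
abbreviation C :: "'a \<Rightarrow> int" where "C \<equiv> Cel G \<tau> \<sigma> d s"
abbreviation NG :: "'a \<Rightarrow> int" where "NG \<equiv> norm_el (carrier G)"
abbreviation \<omega> :: "'a \<Rightarrow> int" where "\<omega> \<equiv> \<delta> \<one> - \<delta> \<tau>"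
abbreviation u :: "'a \<Rightarrow> int" where "u \<equiv> \<delta> (\<tau> [^] ((d + 1) div 2))"
abbreviation \<zeta> :: "'a \<Rightarrow> int" where "\<zeta> \<equiv> \<delta> (inv (\<tau> [^] ((d + 1) div 2))) \<star> \<omega>"

definition tau_sum :: "nat \<Rightarrow> 'a \<Rightarrow> int"
  where "tau_sum k = (\<Sum>i<k. \<delta> (\<tau> [^] i))"

definition W :: "'a \<Rightarrow> int"
  where "W = (\<Sum>j<s. tau_sum (\<theta> j) \<star> \<delta> (\<sigma> [^] j))"

definition V :: "'a \<Rightarrow> int"
  where "V = (\<Sum>j<s div 2. \<delta> (\<sigma> [^] (j + s div 2)))"

definition P :: "'a \<Rightarrow> int"
  where "P = (\<Sum>i<d. zsc ((int d - 1) div 2 - int i) (\<delta> (\<tau> [^] i)))"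

lemma ZG_P [simp]: "P \<in> ZG G"
  by (simp add: P_def)

lemma ZG_T [simp]: "T \<in> ZG G"
  by (simp add: Tsig_def)

lemma ZG_N [simp]: "N \<in> ZG G"
  by (simp add: Ttau_def)

lemma Cel_eq: "C = P \<star> u \<star> T"
  by (simp add: Cel_def P_def)

lemma N_absorb_left: "h \<in> H \<Longrightarrow> \<delta> h \<star> N = N"
  unfolding Ttau_eq_norm_el by (rule norm_el_absorb_left[OF subgroup_H])

lemma N_absorb_right: "h \<in> H \<Longrightarrow> N \<star> \<delta> h = N"
  unfolding Ttau_eq_norm_el by (rule norm_el_absorb_right[OF subgroup_H])

lemma N_mult_N: "N \<star> N = zsc (int d) N"
  unfolding Ttau_eq_norm_el using norm_el_square[OF subgroup_H] card_H by simp

lemma tau_sum_mult_N: "tau_sum k \<star> N = zsc (int k) N"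
proof -
  have sub: "(\<lambda>i. \<tau> [^] i) ` {..<k} \<subseteq> H"
    by (intro image_subsetI pow_in_powers tau_closed)
  show ?thesis
    unfolding Ttau_eq_norm_el tau_sum_def using sum_gel_mult_norm_el[OF subgroup_H sub] by simp
qed

lemma N_mult_tau_sum: "N \<star> tau_sum k = zsc (int k) N"
proof -
  have sub: "(\<lambda>i. \<tau> [^] i) ` {..<k} \<subseteq> H"
    by (intro image_subsetI pow_in_powers tau_closed)
  show ?thesis
    unfolding Ttau_eq_norm_el tau_sum_def using norm_el_mult_sum_gel[OF subgroup_H sub] by simp
qed

lemma N_mult_omega: "N \<star> \<omega> = 0" and omega_mult_N: "\<omega> \<star> N = 0"
  unfolding Ttau_eq_norm_el using norm_el_annihilates[OF subgroup_H tau_in_H] by auto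

lemma sigma_pow_commute_N: "\<delta> (\<sigma> [^] (j::nat)) \<star> N = N \<star> \<delta> (\<sigma> [^] j)"
  unfolding Ttau_eq_norm_el by (rule norm_el_commute_conj) (auto intro: conj_sigma_pow_H)

lemma N_mult_T: "N \<star> T = NG"
proof -
  have "N \<star> T = (\<Sum>i<d. \<Sum>j<s. \<delta> (\<tau> [^] i \<otimes> \<sigma> [^] j))"
    unfolding Ttau_def Tsig_def by (simp add: gmul_sum_left gmul_sum_right gel_mult) (rule sum.swap)
  also have "\<dots> = (\<Sum>p\<in>{..<d} \<times> {..<s}. \<delta> ((\<lambda>(i, j). \<tau> [^] i \<otimes> \<sigma> [^] j) p))"
    by (simp add: sum.cartesian_product) (intro sum.cong refl, auto)
  also have "\<dots> = NG"
    unfolding norm_el_def by (rule sum.reindex_bij_betw[OF bij_betw_tau_sigma_pow])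
  finally show ?thesis .
qed

lemma T_mult_N: "T \<star> N = NG"
proof -
  have "T \<star> N = (\<Sum>j<s. N \<star> \<delta> (\<sigma> [^] j))"
    unfolding Tsig_def by (simp add: gmul_sum_left sigma_pow_commute_N)
  also have "\<dots> = N \<star> T"
    unfolding Tsig_def by (simp add: gmul_sum_right)
  finally show ?thesis by (simp add: N_mult_T)
qed

lemma NG_mult_N: "NG \<star> N = zsc (int d) NG"
proof -
  have sub: "(\<lambda>i. \<tau> [^] i) ` {..<d} \<subseteq> carrier G"
    by (intro image_subsetI nat_pow_closed tau_closed)
  show ?thesis
    unfolding Ttau_def using norm_el_mult_sum_gel[OF subgroup_self sub] by simp
qed

lemma NG_mult_omega: "NG \<star> \<omega> = 0"
  using norm_el_annihilates(1)[OF subgroup_self tau_closed] .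

lemma sigma_pow_mult_omega: "\<delta> (\<sigma> [^] j) \<star> \<omega> = \<omega> \<star> tau_sum (\<theta> j) \<star> \<delta> (\<sigma> [^] j)"
proof -
  have "\<delta> (\<sigma> [^] j) \<star> \<omega> = \<delta> (\<sigma> [^] j) - \<delta> (\<tau> [^] \<theta> j \<otimes> \<sigma> [^] j)"
    by (simp add: gmul_diff_right gel_one_right gel_mult sigma_pow_mult_tau)
  also have "\<dots> = (\<delta> \<one> - \<delta> (\<tau> [^] \<theta> j)) \<star> \<delta> (\<sigma> [^] j)"
    by (simp add: gmul_diff_left gel_one_left gel_mult)
  also have "\<delta> \<one> - \<delta> (\<tau> [^] \<theta> j) = \<omega> \<star> tau_sum (\<theta> j)"
    unfolding tau_sum_def by (rule geometric_sum_telescope [symmetric]) simp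
  finally show ?thesis .
qed

lemma Tsig_mult_omega: "T \<star> \<omega> = \<omega> \<star> W"
  unfolding Tsig_def W_def by (simp add: gmul_sum_left gmul_sum_right sigma_pow_mult_omega gmul_assoc)

lemma sigma_half_mult_tau_sum:
  assumes k: "k \<le> d"
  shows "\<delta> (\<sigma> [^] (s div 2)) \<star> u \<star> tau_sum k = (N - u \<star> tau_sum (d - k)) \<star> \<delta> (\<sigma> [^] (s div 2))"
proof -
  let ?c = "(d + 1) div 2"
  have "\<delta> (\<sigma> [^] (s div 2)) \<star> u \<star> tau_sum k = (\<Sum>i<k. \<delta> (\<sigma> [^] (s div 2) \<otimes> \<tau> [^] (?c + i)))"
    by (simp add: tau_sum_def gmul_sum_right gel_mult nat_pow_mult m_assoc)
  also have "\<dots> = (\<Sum>i<k. \<delta> (\<tau> [^] (?c + (d - 1 - i))) \<star> \<delta> (\<sigma> [^] (s div 2)))"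
  proof (intro sum.cong refl)
    fix i
    assume "i \<in> {..<k}"
    then have "inv (\<tau> [^] (?c + i)) = \<tau> [^] (?c + (d - 1 - i))"
      using k by (intro inv_tau_pow_shift) auto
    then show "\<delta> (\<sigma> [^] (s div 2) \<otimes> \<tau> [^] (?c + i)) =
        \<delta> (\<tau> [^] (?c + (d - 1 - i))) \<star> \<delta> (\<sigma> [^] (s div 2))"
      by (simp only: sigma_half_mult_tau_pow
          gel_mult[OF nat_pow_closed[OF tau_closed] nat_pow_closed[OF sigma_closed]])
  qed
  also have "\<dots> = (\<Sum>i<k. \<delta> (\<tau> [^] (?c + (d - 1 - i)))) \<star> \<delta> (\<sigma> [^] (s div 2))"
    by (simp only: gmul_sum_left)
  also have "(\<Sum>i<k. \<delta> (\<tau> [^] (?c + (d - 1 - i)))) = (\<Sum>l\<in>{d - k..<d}. \<delta> (\<tau> [^] (?c + l)))"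
    by (rule sum.reindex_bij_witness[where i = "\<lambda>l. d - 1 - l" and j = "\<lambda>i. d - 1 - i"])
      (use k in auto)
  also have "\<dots> = N - u \<star> tau_sum (d - k)"
  proof -
    have "N = u \<star> N" by (simp add: N_absorb_left)
    also have "\<dots> = (\<Sum>l<d. \<delta> (\<tau> [^] (?c + l)))"
      by (simp add: Ttau_def gmul_sum_right gel_mult nat_pow_mult)
    also have "\<dots> = (\<Sum>l<d - k. \<delta> (\<tau> [^] (?c + l))) + (\<Sum>l\<in>{d - k..<d}. \<delta> (\<tau> [^] (?c + l)))"
      using k by (simp add: lessThan_atLeast0 sum.atLeastLessThan_concat)
    also have "(\<Sum>l<d - k. \<delta> (\<tau> [^] (?c + l))) = u \<star> tau_sum (d - k)"
      by (simp add: tau_sum_def gmul_sum_right gel_mult nat_pow_mult)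
    finally show ?thesis by (simp only: add_diff_cancel_left')
  qed
  finally show ?thesis .
qed

lemma Bel_eq: "B = u \<star> W - N \<star> V"
proof -
  let ?m = "s div 2"
  let ?S = "\<Sum>j<?m. tau_sum (\<theta> j) \<star> \<delta> (\<sigma> [^] j)"
  let ?R = "\<Sum>j<?m. u \<star> (tau_sum (\<theta> (j + ?m)) \<star> \<delta> (\<sigma> [^] (j + ?m)))"
  have uZ: "u \<in> ZG G" by simp
  have B: "B = u \<star> ?S - \<delta> (\<sigma> [^] ?m) \<star> u \<star> ?S"
    unfolding Bel_def tau_sum_def by (simp only: gmul_diff_left gel_one_left[OF uZ])
  have "\<delta> (\<sigma> [^] ?m) \<star> u \<star> ?S = (\<Sum>j<?m. (\<delta> (\<sigma> [^] ?m) \<star> u \<star> tau_sum (\<theta> j)) \<star> \<delta> (\<sigma> [^] j))"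
    by (simp only: gmul_sum_right gmul_assoc)
  also have "\<dots> = (\<Sum>j<?m. (N - u \<star> tau_sum (d - \<theta> j)) \<star> (\<delta> (\<sigma> [^] ?m) \<star> \<delta> (\<sigma> [^] j)))"
  proof (intro sum.cong refl)
    fix j
    have "\<theta> j \<le> d" using theta(1)[of j] by simp
    then show "(\<delta> (\<sigma> [^] ?m) \<star> u \<star> tau_sum (\<theta> j)) \<star> \<delta> (\<sigma> [^] j) =
        (N - u \<star> tau_sum (d - \<theta> j)) \<star> (\<delta> (\<sigma> [^] ?m) \<star> \<delta> (\<sigma> [^] j))"
      by (subst sigma_half_mult_tau_sum) (simp_all only: gmul_assoc)
  qed
  also have "\<dots> = (\<Sum>j<?m. N \<star> \<delta> (\<sigma> [^] (j + ?m)) - u \<star> (tau_sum (\<theta> (j + ?m)) \<star> \<delta> (\<sigma> [^] (j + ?m))))"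
  proof (intro sum.cong refl)
    fix j
    have "\<delta> (\<sigma> [^] ?m) \<star> \<delta> (\<sigma> [^] j) = \<delta> (\<sigma> [^] (j + ?m))"
      by (simp add: gel_mult nat_pow_mult add.commute)
    then show "(N - u \<star> tau_sum (d - \<theta> j)) \<star> (\<delta> (\<sigma> [^] ?m) \<star> \<delta> (\<sigma> [^] j)) =
        N \<star> \<delta> (\<sigma> [^] (j + ?m)) - u \<star> (tau_sum (\<theta> (j + ?m)) \<star> \<delta> (\<sigma> [^] (j + ?m)))"
      by (simp only: theta_add_half gmul_diff_left gmul_assoc)
  qed
  also have "\<dots> = N \<star> V - ?R"
    by (simp only: V_def sum_subtractf gmul_sum_right)
  finally have S: "\<delta> (\<sigma> [^] ?m) \<star> u \<star> ?S = N \<star> V - ?R" .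
  have W: "u \<star> W = u \<star> ?S + ?R"
    unfolding W_def sum_lessThan_s_split[of "\<lambda>j. tau_sum (\<theta> j) \<star> \<delta> (\<sigma> [^] j)"]
    by (simp only: gmul_add_right gmul_sum_right)
  show ?thesis
    unfolding B S W by (rule ext) simp
qed

lemma omega_commute_u: "\<omega> \<star> u = u \<star> \<omega>"
proof -
  have "\<tau> \<otimes> \<tau> [^] ((d + 1) div 2) = \<tau> [^] ((d + 1) div 2) \<otimes> \<tau>"
    by (metis nat_pow_Suc nat_pow_Suc2 tau_closed)
  then show ?thesis
    by (simp add: gmul_diff_left gmul_diff_right gel_one_left gel_one_right gel_mult)
qed

lemma zeta_mult_Bel: "\<zeta> \<star> B = T \<star> \<omega>"
proof -
  let ?v = "\<delta> (inv (\<tau> [^] ((d + 1) div 2)))"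
  have "\<omega> \<star> B = (\<omega> \<star> u) \<star> W - (\<omega> \<star> N) \<star> V"
    by (simp only: Bel_eq gmul_diff_right gmul_assoc)
  also have "\<dots> = u \<star> (T \<star> \<omega>)"
    by (simp only: omega_commute_u omega_mult_N gmul_zero_left diff_zero gmul_assoc Tsig_mult_omega)
  finally have "\<zeta> \<star> B = (?v \<star> u) \<star> (T \<star> \<omega>)"
    by (simp only: gmul_assoc)
  also have "\<dots> = T \<star> \<omega>"
    by (simp add: gel_mult gel_one_left)
  finally show ?thesis .
qed

lemma P_mult_omega: "P \<star> \<omega> = zsc (int d) (\<delta> \<one>) - N"
proof -
  let ?c = "(int d - 1) div 2"
  have "P \<star> \<omega> = zsc (?c + 1) (\<delta> \<one>) - N - zsc (?c + 1 - int d) (\<delta> (\<tau> [^] d))"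
    unfolding P_def Ttau_def by (rule linear_sum_telescope[OF tau_closed])
  also have "\<dots> = zsc (int d) (\<delta> \<one>) - N"
    by (rule ext) (simp add: zsc_apply algebra_simps)
  finally show ?thesis .
qed

lemma omega_mult_P: "\<omega> \<star> P = zsc (int d) (\<delta> \<one>) - N"
proof -
  have "\<delta> \<tau> \<star> P = P \<star> \<delta> \<tau>"
    unfolding P_def by (rule gel_commute_power_sum) simp
  then have "\<omega> \<star> P = P \<star> \<omega>"
    by (simp add: gmul_diff_left gmul_diff_right gel_one_left gel_one_right)
  then show ?thesis by (simp add: P_mult_omega)
qed

lemma W_mult_N: "W \<star> N = N \<star> W"
proof -
  have "W \<star> N = (\<Sum>j<s. tau_sum (\<theta> j) \<star> (\<delta> (\<sigma> [^] j) \<star> N))"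
    by (simp only: W_def gmul_sum_left gmul_assoc)
  also have "\<dots> = (\<Sum>j<s. (tau_sum (\<theta> j) \<star> N) \<star> \<delta> (\<sigma> [^] j))"
    by (simp only: sigma_pow_commute_N gmul_assoc)
  also have "\<dots> = (\<Sum>j<s. (N \<star> tau_sum (\<theta> j)) \<star> \<delta> (\<sigma> [^] j))"
    by (simp only: tau_sum_mult_N N_mult_tau_sum)
  also have "\<dots> = N \<star> W"
    by (simp only: W_def gmul_sum_right gmul_assoc)
  finally show ?thesis .
qed

lemma V_mult_N: "V \<star> N = N \<star> V"
  by (simp add: V_def gmul_sum_left gmul_sum_right sigma_pow_commute_N)

lemma Cel_mult_omega: "C \<star> \<omega> = zsc (int d) B - B \<star> N"
proof -
  have uW: "u \<star> (\<omega> \<star> W) = \<omega> \<star> (u \<star> W)"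
    by (simp only: gmul_assoc [symmetric] omega_commute_u)
  have "B \<star> N = u \<star> (N \<star> W) - N \<star> (N \<star> V)"
    by (simp only: Bel_eq gmul_diff_left gmul_assoc W_mult_N V_mult_N)
  also have "\<dots> = N \<star> W - zsc (int d) (N \<star> V)"
    by (simp only: gmul_assoc [symmetric] N_absorb_left[OF pow_in_powers[OF tau_closed]] N_mult_N gmul_zsc_left)
  finally have BN: "B \<star> N = N \<star> W - zsc (int d) (N \<star> V)" .
  have "C \<star> \<omega> = (P \<star> \<omega>) \<star> (u \<star> W)"
    using uW by (simp only: Cel_eq gmul_assoc Tsig_mult_omega)
  also have "\<dots> = zsc (int d) (u \<star> W) - N \<star> W"
    by (simp add: P_mult_omega gmul_diff_left gmul_zsc_left gel_one_left gmul_assoc [symmetric]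
        N_absorb_right)
  also have "\<dots> = zsc (int d) B - B \<star> N"
    unfolding BN unfolding Bel_eq zsc_diff by (rule ext) simp
  finally show ?thesis .
qed

lemma T_mult_N_add_zeta_Cel: "T \<star> N + \<zeta> \<star> C = zsc (int d) T"
proof -
  let ?v = "\<delta> (inv (\<tau> [^] ((d + 1) div 2)))"
  have v_in_H: "inv (\<tau> [^] ((d + 1) div 2)) \<in> H"
    using subgroup.m_inv_closed[OF subgroup_H] by simp
  have vu: "?v \<star> u = \<delta> \<one>"
    by (simp add: gel_mult)
  have "\<zeta> \<star> C = ?v \<star> ((\<omega> \<star> P) \<star> u) \<star> T"
    by (simp only: Cel_eq gmul_assoc)
  also have "\<dots> = ?v \<star> (zsc (int d) u - N) \<star> T"
    by (simp only: omega_mult_P) (simp only: gmul_diff_left gmul_zsc_left gel_one_left[OF ZG_gel]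
        N_absorb_right[OF pow_in_powers[OF tau_closed]] nat_pow_closed tau_closed)
  also have "\<dots> = (zsc (int d) (\<delta> \<one>) - N) \<star> T"
    by (simp only: gmul_diff_right gmul_zsc_right vu N_absorb_left[OF v_in_H])
  also have "\<dots> = zsc (int d) T - NG"
    by (simp only: gmul_diff_left gmul_zsc_left gel_one_left[OF ZG_T] N_mult_T)
  finally show ?thesis
    by (simp add: T_mult_N)
qed

lemma Cel_mult_N: "C \<star> N = 0"
proof -
  have "C \<star> N = P \<star> (u \<star> NG)"
    by (simp only: Cel_eq gmul_assoc T_mult_N)
  also have "\<dots> = P \<star> NG"
    by (subst norm_el_absorb_left[OF subgroup_self]) simp_all
  also have "\<dots> = zsc (\<Sum>i<d. (int d - 1) div 2 - int i) NG"
    by (simp add: P_def gmul_sum_left gmul_zsc_left norm_el_absorb_left[OF subgroup_self] sum_zsc)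
  also have "\<dots> = 0"
    by (simp add: sum_centred_eq_0[OF d_odd])
  finally show ?thesis .
qed

subsection \<open>The left ideal generated by \<open>T\<^sub>\<sigma>\<close>\<close>

lemma Tsig_mult_sigma: "T \<star> \<delta> \<sigma> = T"
  unfolding Tsig_eq_norm_el
  by (rule norm_el_absorb_right[OF subgroup_powers gen_in_powers]) simp_all

lemma gmul_Tsig_sigma_invariant:
  assumes "g \<in> carrier G"
  shows "(y \<star> T) (g \<otimes> \<sigma>) = (y \<star> T) g"
proof -
  have "(y \<star> T) (g \<otimes> \<sigma>) = ((y \<star> T) \<star> \<delta> \<sigma>) (g \<otimes> \<sigma>)"
    by (simp only: gmul_assoc Tsig_mult_sigma)
  also have "\<dots> = (y \<star> T) g"
    using assms by (simp add: gmul_gel_right_apply m_assoc)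
  finally show ?thesis .
qed

lemma gmul_omega_apply: "x \<in> ZG G \<Longrightarrow> g \<in> carrier G \<Longrightarrow> (x \<star> \<omega>) g = x g - x (g \<otimes> inv \<tau>)"
  by (simp add: gmul_diff_right gel_one_right gmul_gel_right_apply)

lemma sigma_invariant_const_on_cosets:
  assumes inv: "\<And>g. g \<in> carrier G \<Longrightarrow> x (g \<otimes> \<sigma>) = x g"
  shows "x (\<tau> [^] (i::nat) \<otimes> \<sigma> [^] (j::nat)) = x (\<tau> [^] i)"
proof (induction j)
  case (Suc j)
  have "\<tau> [^] i \<otimes> \<sigma> [^] Suc j = \<tau> [^] i \<otimes> \<sigma> [^] j \<otimes> \<sigma>"
    by (simp add: m_assoc)
  then show ?case using Suc inv[of "\<tau> [^] i \<otimes> \<sigma> [^] j"] by simp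
qed simp

lemma sigma_invariant_in_Tsig_ideal:
  assumes x: "x \<in> ZG G" and inv: "\<And>g. g \<in> carrier G \<Longrightarrow> x (g \<otimes> \<sigma>) = x g"
  shows "x \<in> lideal G T"
proof -
  have const: "x (\<tau> [^] i \<otimes> \<sigma> [^] j) = x (\<tau> [^] i)" for i j :: nat
    using inv by (rule sigma_invariant_const_on_cosets)
  let ?y = "\<Sum>i<d. zsc (x (\<tau> [^] i)) (\<delta> (\<tau> [^] i))"
  have "?y \<star> T = (\<Sum>i<d. \<Sum>j<s. zsc (x (\<tau> [^] i \<otimes> \<sigma> [^] j)) (\<delta> (\<tau> [^] i \<otimes> \<sigma> [^] j)))"
    unfolding Tsig_def
    by (simp add: gmul_sum_left gmul_sum_right gmul_zsc_left gel_mult const) (rule sum.swap)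
  also have "\<dots> = (\<Sum>p\<in>{..<d} \<times> {..<s}. (\<lambda>g. zsc (x g) (\<delta> g)) ((\<lambda>(i, j). \<tau> [^] i \<otimes> \<sigma> [^] j) p))"
    by (simp add: sum.cartesian_product) (intro sum.cong refl, auto)
  also have "\<dots> = (\<Sum>g\<in>carrier G. zsc (x g) (\<delta> g))"
    by (rule sum.reindex_bij_betw[OF bij_betw_tau_sigma_pow])
  also have "\<dots> = x"
    using ZG_expand[OF x] by simp
  finally show ?thesis
    using gmul_mem_lideal[of ?y T] by simp
qed

lemma sigma_invariant_dvd_diff_one:
  assumes inv: "\<And>g. g \<in> carrier G \<Longrightarrow> x (g \<otimes> \<sigma>) = x g"
    and step: "\<And>g. g \<in> carrier G \<Longrightarrow> (n::int) dvd x g - x (g \<otimes> inv \<tau>)"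
    and g: "g \<in> carrier G"
  shows "n dvd x g - x \<one>"
proof -
  have sigma_part: "x (\<tau> [^] i \<otimes> \<sigma> [^] j) = x (\<tau> [^] i)" for i j :: nat
    using inv by (rule sigma_invariant_const_on_cosets)
  have tau_part: "n dvd x (\<tau> [^] i) - x \<one>" for i :: nat
  proof (induction i)
    case (Suc i)
    have "\<tau> [^] Suc i \<otimes> inv \<tau> = \<tau> [^] i"
      by (simp add: m_assoc)
    then have "n dvd x (\<tau> [^] Suc i) - x (\<tau> [^] i)"
      using step[of "\<tau> [^] Suc i"] by simp
    then show ?case
      using Suc dvd_add by fastforce
  qed simp
  obtain i j :: nat where "g = \<tau> [^] i \<otimes> \<sigma> [^] j"
    using g carrier_eq by auto
  then show ?thesis using sigma_part tau_part by simp
qed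

lemma Tsig_ideal_decompose:
  assumes xT: "x \<in> lideal G T" and dvd_omega: "\<And>g. n dvd (x \<star> \<omega>) g"
  shows "\<exists>q\<in>lideal G T. x = zsc (x \<one>) NG + zsc n q"
proof -
  have x: "x \<in> ZG G"
    using xT by (auto simp: lideal_iff)
  have inv: "x (g \<otimes> \<sigma>) = x g" if "g \<in> carrier G" for g
    using xT that by (auto simp: lideal_iff gmul_Tsig_sigma_invariant)
  have dvd: "n dvd x g - x \<one>" if "g \<in> carrier G" for g
    using inv _ that
  proof (rule sigma_invariant_dvd_diff_one)
    show "n dvd x h - x (h \<otimes> inv \<tau>)" if "h \<in> carrier G" for h
      using dvd_omega[of h] gmul_omega_apply[OF x that] by simp
  qed
  define q where "q g = (if g \<in> carrier G then (x g - x \<one>) div n else 0)" for g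
  have "q \<in> ZG G"
    by (simp add: q_def ZG_def)
  moreover have "q (g \<otimes> \<sigma>) = q g" if "g \<in> carrier G" for g
    using that inv by (simp add: q_def)
  ultimately have "q \<in> lideal G T"
    by (rule sigma_invariant_in_Tsig_ideal)
  moreover have "x = zsc (x \<one>) NG + zsc n q"
  proof (rule ext)
    fix g
    show "x g = (zsc (x \<one>) NG + zsc n q) g"
      using dvd[of g] x by (cases "g \<in> carrier G") (auto simp: q_def zsc_apply norm_el_carrier_apply ZG_def)
  qed
  ultimately show ?thesis by blast
qed

lemma Tsig_ideal_ker_omega:
  assumes xT: "x \<in> lideal G T" and x_omega: "x \<star> \<omega> = 0"
  shows "x = zsc (x \<one>) NG"
proof -
  have dvd: "(0::int) dvd (x \<star> \<omega>) g" for g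
    using x_omega by simp
  obtain q where "q \<in> lideal G T" and "x = zsc (x \<one>) NG + zsc 0 q"
    using Tsig_ideal_decompose[OF xT dvd] by (rule bexE)
  then show ?thesis
    by (simp only: zsc_zero_left add_0_right)
qed

lemma Cel_in_Tsig_ideal: "w \<star> C \<in> lideal G T"
  unfolding Cel_eq gmul_assoc [symmetric] by simp

lemma gmul_Cel_mult_omega: "(w \<star> C) \<star> \<omega> = zsc (int d) (w \<star> B) - (w \<star> B) \<star> N"
  by (simp only: gmul_assoc Cel_mult_omega) (simp only: gmul_diff_right gmul_zsc_right gmul_assoc)

lemma gmul_Bel_eq_0_imp_gmul_Cel_eq_0:
  assumes wB: "w \<star> B = 0"
  shows "w \<star> C = 0"
proof -
  define c where "c = (w \<star> C) \<one>"
  have "(w \<star> C) \<star> \<omega> = 0"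
    by (simp add: gmul_Cel_mult_omega wB)
  with Cel_in_Tsig_ideal have wC: "w \<star> C = zsc c NG"
    unfolding c_def by (rule Tsig_ideal_ker_omega)
  have "zsc (c * int d) NG = (w \<star> C) \<star> N"
    by (simp add: wC gmul_zsc_left NG_mult_N)
  also have "\<dots> = 0"
    by (simp only: gmul_assoc Cel_mult_N gmul_zero_right)
  finally have cdNG: "zsc (c * int d) NG = 0" .
  have "c * int d = zsc (c * int d) NG \<one>"
    by (simp add: zsc_apply norm_el_carrier_apply)
  also have "\<dots> = 0"
    by (simp add: cdNG)
  finally have "c * int d = 0" .
  then have "c = 0"
    using d_ge_3 by simp
  then show ?thesis
    using wC by simp
qed

lemma Bel_ideal_ker_N:
  assumes xB: "x \<in> lideal G B" and xN: "x \<star> N = 0"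
  shows "x \<in> (\<lambda>y. y \<star> \<omega>) ` lideal G T"
proof -
  obtain w where x: "x = w \<star> B"
    using xB by (auto simp: lideal_iff)
  have "(w \<star> C) \<star> \<omega> = zsc (int d) (w \<star> B) - (w \<star> B) \<star> N"
    by (rule gmul_Cel_mult_omega)
  also have "\<dots> = zsc (int d) x"
    by (simp only: x [symmetric] xN diff_zero)
  finally have wC_omega: "(w \<star> C) \<star> \<omega> = zsc (int d) x" .
  have dvd: "int d dvd ((w \<star> C) \<star> \<omega>) g" for g
    unfolding wC_omega zsc_apply by simp
  define c where "c = (w \<star> C) \<one>"
  obtain q where q: "q \<in> lideal G T" and wC: "w \<star> C = zsc c NG + zsc (int d) q"
    using Tsig_ideal_decompose[OF Cel_in_Tsig_ideal dvd] unfolding c_def by (rule bexE)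
  have "zsc (int d) x = (w \<star> C) \<star> \<omega>"
    by (rule wC_omega [symmetric])
  also have "\<dots> = zsc c (NG \<star> \<omega>) + zsc (int d) (q \<star> \<omega>)"
    by (simp only: wC gmul_add_left gmul_zsc_left)
  also have "\<dots> = zsc (int d) (q \<star> \<omega>)"
    by (simp add: NG_mult_omega)
  finally have "zsc (int d) x = zsc (int d) (q \<star> \<omega>)" .
  then have "x = q \<star> \<omega>"
    by (rule zsc_cancel [rotated]) (use d_ge_3 in simp)
  then show ?thesis
    using q by blast
qed

subsection \<open>The complex and its prism\<close>

lemma d2_eq: "d2 G \<tau> = (\<lambda>x. x \<star> \<omega>)"
  by (rule ext) (simp only: d2_def)

lemma d3_eq: "d3 G \<tau> d = (\<lambda>x. x \<star> N)"
  by (rule ext) (simp only: d3_def)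

lemma d1_image_subset: "d1 ` M1 G \<tau> \<sigma> d s \<subseteq> M2 G \<tau> \<sigma> d s"
proof -
  have "T \<star> N = N \<star> T"
    by (simp only: T_mult_N N_mult_T)
  then have "T \<star> N \<in> lideal G T"
    by simp
  then show ?thesis
    unfolding d1_def M1_def M2_def by (simp add: lideal_subset)
qed

lemma d2_image_subset: "d2 G \<tau> ` M2 G \<tau> \<sigma> d s \<subseteq> M3 G \<tau> \<sigma> d s"
proof -
  have "T \<star> \<omega> \<in> lideal G B"
    unfolding zeta_mult_Bel [symmetric] by simp
  then show ?thesis
    unfolding d2_eq M2_def M3_def image_gmul_right_lideal by (rule lideal_subset)
qed

lemma d3_image_eq: "d3 G \<tau> d ` M3 G \<tau> \<sigma> d s = M4 G \<tau> \<sigma> d s"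
  unfolding d3_eq M3_def M4_def by (rule image_gmul_right_lideal)

lemma ker_d2: "{x \<in> M2 G \<tau> \<sigma> d s. d2 G \<tau> x = 0} = d1 ` M1 G \<tau> \<sigma> d s"
proof
  show "{x \<in> M2 G \<tau> \<sigma> d s. d2 G \<tau> x = 0} \<subseteq> d1 ` M1 G \<tau> \<sigma> d s"
  proof
    fix x
    assume "x \<in> {x \<in> M2 G \<tau> \<sigma> d s. d2 G \<tau> x = 0}"
    then have "x = zsc (x \<one>) NG"
      by (intro Tsig_ideal_ker_omega) (simp_all add: M2_def d2_def)
    also have "\<dots> = zsc (x \<one>) (\<delta> \<one>) \<star> (T \<star> N)"
      by (simp add: T_mult_N gmul_zsc_left gel_one_left)
    finally have x: "x = zsc (x \<one>) (\<delta> \<one>) \<star> (T \<star> N)" .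
    have "zsc (x \<one>) (\<delta> \<one>) \<star> (T \<star> N) \<in> lideal G (T \<star> N)"
      by simp
    then show "x \<in> d1 ` M1 G \<tau> \<sigma> d s"
      unfolding d1_def M1_def image_ident by (subst x)
  qed
  show "d1 ` M1 G \<tau> \<sigma> d s \<subseteq> {x \<in> M2 G \<tau> \<sigma> d s. d2 G \<tau> x = 0}"
    using d1_image_subset
    by (auto simp: d1_def d2_def M1_def lideal_iff gmul_assoc N_mult_omega)
qed

lemma ker_d3: "{x \<in> M3 G \<tau> \<sigma> d s. d3 G \<tau> d x = 0} = d2 G \<tau> ` M2 G \<tau> \<sigma> d s"
proof
  show "{x \<in> M3 G \<tau> \<sigma> d s. d3 G \<tau> d x = 0} \<subseteq> d2 G \<tau> ` M2 G \<tau> \<sigma> d s"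
    using Bel_ideal_ker_N by (auto simp: M2_def M3_def d2_eq d3_def)
  show "d2 G \<tau> ` M2 G \<tau> \<sigma> d s \<subseteq> {x \<in> M3 G \<tau> \<sigma> d s. d3 G \<tau> d x = 0}"
    using d2_image_subset
    by (auto simp: d2_def d3_def M2_def lideal_iff gmul_assoc omega_mult_N)
qed

lemma Cel_well_defined: "x \<star> B = y \<star> B \<Longrightarrow> x \<star> C = y \<star> C"
  using gmul_Bel_eq_0_imp_gmul_Cel_eq_0[of "x - y"] by (simp add: gmul_diff_left)

lemma h2_gmul_Bel:
  assumes x: "x \<in> ZG G"
  shows "h2 G \<tau> \<sigma> d s (x \<star> B) = x \<star> C"
proof -
  let ?Q = "\<lambda>z. \<exists>x'\<in>ZG G. x \<star> B = x' \<star> B \<and> z = x' \<star> C"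
  have "?Q (x \<star> C)"
    using x by blast
  then have "?Q (SOME z. ?Q z)"
    by (rule someI[of ?Q])
  then obtain x' where "x \<star> B = x' \<star> B" and some: "(SOME z. ?Q z) = x' \<star> C"
    by blast
  from \<open>x \<star> B = x' \<star> B\<close> have "x \<star> C = x' \<star> C"
    by (rule Cel_well_defined)
  then show ?thesis
    unfolding h2_def using some by simp
qed

lemma h2_image_subset: "h2 G \<tau> \<sigma> d s ` M3 G \<tau> \<sigma> d s \<subseteq> M2 G \<tau> \<sigma> d s"
  using Cel_in_Tsig_ideal by (auto simp: M2_def M3_def lideal_iff h2_gmul_Bel)

lemma h2_add:
  assumes "m \<in> M3 G \<tau> \<sigma> d s" "n \<in> M3 G \<tau> \<sigma> d s"
  shows "h2 G \<tau> \<sigma> d s (m + n) = h2 G \<tau> \<sigma> d s m + h2 G \<tau> \<sigma> d s n"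
  using assms by (auto simp: M3_def lideal_iff gmul_add_left [symmetric] h2_gmul_Bel)

lemma h2_gmul:
  assumes "r \<in> ZG G" "m \<in> M3 G \<tau> \<sigma> d s"
  shows "h2 G \<tau> \<sigma> d s (r \<star> m) = r \<star> h2 G \<tau> \<sigma> d s m"
  using assms by (auto simp: M3_def lideal_iff gmul_assoc [symmetric] h2_gmul_Bel)

lemma prism_M1: "x \<in> M1 G \<tau> \<sigma> d s \<Longrightarrow> h1 G \<tau> d (d1 x) = zsc (int d) x"
  unfolding h1_def d1_def M1_def by (rule lideal_gmul_scaled_idem[OF N_mult_N])

lemma prism_M2:
  assumes "x \<in> M2 G \<tau> \<sigma> d s"
  shows "d1 (h1 G \<tau> d x) + h2 G \<tau> \<sigma> d s (d2 G \<tau> x) = zsc (int d) x"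
proof -
  obtain y where y: "y \<in> ZG G" and x: "x = y \<star> T"
    using assms by (auto simp: M2_def lideal_iff)
  have "d2 G \<tau> x = (y \<star> \<zeta>) \<star> B"
    by (simp only: d2_def x gmul_assoc[of y] zeta_mult_Bel)
  then have "h2 G \<tau> \<sigma> d s (d2 G \<tau> x) = (y \<star> \<zeta>) \<star> C"
    using y by (simp add: h2_gmul_Bel)
  then have "d1 (h1 G \<tau> d x) + h2 G \<tau> \<sigma> d s (d2 G \<tau> x) = y \<star> (T \<star> N + \<zeta> \<star> C)"
    by (simp only: d1_def h1_def x gmul_assoc gmul_add_right)
  also have "\<dots> = zsc (int d) x"
    by (simp only: T_mult_N_add_zeta_Cel gmul_zsc_right x)
  finally show ?thesis .
qed

lemma prism_M3:
  assumes "x \<in> M3 G \<tau> \<sigma> d s"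
  shows "d2 G \<tau> (h2 G \<tau> \<sigma> d s x) + h3 (d3 G \<tau> d x) = zsc (int d) x"
proof -
  obtain y where y: "y \<in> ZG G" and x: "x = y \<star> B"
    using assms by (auto simp: M3_def lideal_iff)
  have "C \<star> \<omega> + B \<star> N = zsc (int d) B"
    by (simp add: Cel_mult_omega)
  then have "d2 G \<tau> (h2 G \<tau> \<sigma> d s x) + h3 (d3 G \<tau> d x) = y \<star> zsc (int d) B"
    using y by (simp add: x h2_gmul_Bel d2_def d3_def h3_def gmul_assoc gmul_add_right [symmetric])
  then show ?thesis
    by (simp add: gmul_zsc_right x)
qed

lemma prism_M4: "x \<in> M4 G \<tau> \<sigma> d s \<Longrightarrow> d3 G \<tau> d (h3 x) = zsc (int d) x"
  unfolding d3_def h3_def M4_def by (rule lideal_gmul_scaled_idem[OF N_mult_N])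

end

theorem theorem6p7:
  fixes G :: "('a, 'b) monoid_scheme" and \<tau> \<sigma> :: 'a and d s :: nat
  assumes grp: "group G"
    and d_odd: "odd d" and s_even: "even s" and s_dvd: "s dvd (d - 1)"
    and tau: "\<tau> \<in> carrier G" and sigma: "\<sigma> \<in> carrier G"
    and ord_tau: "group.ord G \<tau> = d" and ord_sigma: "group.ord G \<sigma> = s"
    and gen: "carrier G = {\<tau> [^]\<^bsub>G\<^esub> i \<otimes>\<^bsub>G\<^esub> \<sigma> [^]\<^bsub>G\<^esub> j | i j. i < d \<and> j < s}"
    and card: "card (carrier G) = d * s"
    and normal: "\<sigma> \<otimes>\<^bsub>G\<^esub> \<tau> \<otimes>\<^bsub>G\<^esub> inv\<^bsub>G\<^esub> \<sigma> \<in> {\<tau> [^]\<^bsub>G\<^esub> i | i. i < d}"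
    and aut_order: "\<forall>k. 0 < k \<and> k < s \<longrightarrow>
        \<sigma> [^]\<^bsub>G\<^esub> k \<otimes>\<^bsub>G\<^esub> \<tau> \<otimes>\<^bsub>G\<^esub> inv\<^bsub>G\<^esub> (\<sigma> [^]\<^bsub>G\<^esub> k) \<noteq> \<tau>"
    and half: "\<sigma> [^]\<^bsub>G\<^esub> (s div 2) \<otimes>\<^bsub>G\<^esub> \<tau> \<otimes>\<^bsub>G\<^esub> inv\<^bsub>G\<^esub> (\<sigma> [^]\<^bsub>G\<^esub> (s div 2)) = inv\<^bsub>G\<^esub> \<tau>"
  shows
    \<comment> \<open>(1) the maps land in the stated modules and the sequence is exact\<close>
    "(d1 ` M1 G \<tau> \<sigma> d s \<subseteq> M2 G \<tau> \<sigma> d s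
      \<and> d2 G \<tau> ` M2 G \<tau> \<sigma> d s \<subseteq> M3 G \<tau> \<sigma> d s
      \<and> d3 G \<tau> d ` M3 G \<tau> \<sigma> d s \<subseteq> M4 G \<tau> \<sigma> d s
      \<and> inj_on d1 (M1 G \<tau> \<sigma> d s)
      \<and> {x \<in> M2 G \<tau> \<sigma> d s. d2 G \<tau> x = 0} = d1 ` M1 G \<tau> \<sigma> d s
      \<and> {x \<in> M3 G \<tau> \<sigma> d s. d3 G \<tau> d x = 0} = d2 G \<tau> ` M2 G \<tau> \<sigma> d s
      \<and> d3 G \<tau> d ` M3 G \<tau> \<sigma> d s = M4 G \<tau> \<sigma> d s)
   \<and> \<comment> \<open>(2) h2 is well defined and a Z[G]-module homomorphism M3 -> M2\<close>
     ((\<forall>x\<in>ZG G. \<forall>y\<in>ZG G. gmul G x (Bel G \<tau> \<sigma> d s) = gmul G y (Bel G \<tau> \<sigma> d s)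
          \<longrightarrow> gmul G x (Cel G \<tau> \<sigma> d s) = gmul G y (Cel G \<tau> \<sigma> d s))
      \<and> (\<forall>x\<in>ZG G. h2 G \<tau> \<sigma> d s (gmul G x (Bel G \<tau> \<sigma> d s)) = gmul G x (Cel G \<tau> \<sigma> d s))
      \<and> h2 G \<tau> \<sigma> d s ` M3 G \<tau> \<sigma> d s \<subseteq> M2 G \<tau> \<sigma> d s
      \<and> (\<forall>m\<in>M3 G \<tau> \<sigma> d s. \<forall>n\<in>M3 G \<tau> \<sigma> d s.
            h2 G \<tau> \<sigma> d s (m + n) = h2 G \<tau> \<sigma> d s m + h2 G \<tau> \<sigma> d s n)
      \<and> (\<forall>r\<in>ZG G. \<forall>m\<in>M3 G \<tau> \<sigma> d s.
            h2 G \<tau> \<sigma> d s (gmul G r m) = gmul G r (h2 G \<tau> \<sigma> d s m)))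
   \<and> \<comment> \<open>(3) prism conditions\<close>
     ((\<forall>x\<in>M1 G \<tau> \<sigma> d s. h1 G \<tau> d (d1 x) = zsc (int d) x)
      \<and> (\<forall>x\<in>M2 G \<tau> \<sigma> d s. d1 (h1 G \<tau> d x) + h2 G \<tau> \<sigma> d s (d2 G \<tau> x) = zsc (int d) x)
      \<and> (\<forall>x\<in>M3 G \<tau> \<sigma> d s. d2 G \<tau> (h2 G \<tau> \<sigma> d s x) + h3 (d3 G \<tau> d x) = zsc (int d) x)
      \<and> (\<forall>x\<in>M4 G \<tau> \<sigma> d s. d3 G \<tau> d (h3 x) = zsc (int d) x))"
proof -
  have "s \<noteq> 0"
    using gen monoid.one_closed[OF group.is_monoid[OF grp]] by auto
  moreover have "d \<noteq> 0"
    using d_odd by presburger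
  ultimately have "finite (carrier G)"
    using card by (metis card.infinite mult_is_0)
  then interpret metacyclic G \<tau> \<sigma> d s
    using grp d_odd s_even tau sigma ord_tau ord_sigma gen card normal aut_order half
    by (intro metacyclic.intro group_ring.intro group_ring_axioms.intro metacyclic_axioms.intro)
  have "inj_on d1 (M1 G \<tau> \<sigma> d s)"
    by (simp add: inj_on_def d1_def)
  then show ?thesis
    by (intro conjI ballI impI d1_image_subset d2_image_subset d3_image_eq[THEN equalityD1]
        d3_image_eq ker_d2 ker_d3
        Cel_well_defined h2_gmul_Bel h2_image_subset h2_add h2_gmul
        prism_M1 prism_M2 prism_M3 prism_M4) assumption+
qed

end
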